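(* Let $F\subsetneq K$ be fields of characteristic $0$, with $F$ a proper nonempty subfield of $K$. Let $p(x)=\sum_{k=0}^{n}a_k x^k\in K[x]$ be non-constant with $a_n\neq 0$, and let $q(x)=\sum_{j=0}^{m}b_j x^j\in K[x]$ with $b_m\neq 0$. Suppose $a_nb_m\in F$. Then $D_F(p\circ q)\geq D_F(q)$.
   Context: For sets $F\subset K$ and $p(x)=\sum_{k=0}^{n}a_kx^k\in K[x]$ with $a_n\neq 0$, the $F$ deficit $D_F(p)$ is defined as follows: if $p\in K[x]\setminus F[x]$, then $D_F(p)=n-\max\{0\le k\le n: a_k\notin F\}$; if $p\in F[x]$, then $D_F(p)=n$. Here $F[x]$ denotes the set of polynomials with all coefficients in $F$. *)

theory Defs
  imports "HOL-Computational_Algebra.Polynomial"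
begin

text \<open>A subfield F of the ambient field K (= the type 'a).\<close>
definition is_subfield :: "'a::field set \<Rightarrow> bool" where
  "is_subfield F \<longleftrightarrow> 0 \<in> F \<and> 1 \<in> F \<and>
     (\<forall>x\<in>F. \<forall>y\<in>F. x + y \<in> F) \<and> (\<forall>x\<in>F. - x \<in> F) \<and>
     (\<forall>x\<in>F. \<forall>y\<in>F. x * y \<in> F) \<and> (\<forall>x\<in>F. x \<noteq> 0 \<longrightarrow> inverse x \<in> F)"

definition deficit :: "'a::field set \<Rightarrow> 'a poly \<Rightarrow> nat" where
  "deficit F p =
     (if \<forall>k. coeff p k \<in> F then degree p
      else degree p - Max {k. k \<le> degree p \<and> coeff p k \<notin> F})"

end

theory Submission
  imports Defs
begin

text \<open>Let \<open>d = D\<^sub>F(q)\<close>, \<open>m = deg q\<close>, \<open>n = deg p\<close>. The deficit condition says exactly that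
  \<open>q = h + r\<close> with \<open>h \<in> F[x]\<close> and \<open>deg r \<le> m - d\<close>. If \<open>d > 0\<close> the leading coefficient of \<open>q\<close>
  lies in \<open>F\<close>, hence so does that of \<open>p\<close>. Now \<open>p \<circ> q\<close> differs from \<open>a\<^sub>n q\<^sup>n\<close> by a polynomial of
  degree at most \<open>(n - 1) m\<close>, and \<open>q\<^sup>n - h\<^sup>n = r (q\<^sup>n\<^sup>-\<^sup>1 + \<dots> + h\<^sup>n\<^sup>-\<^sup>1)\<close> has degree at most
  \<open>(n - 1) m + m - d\<close>. So \<open>p \<circ> q\<close> agrees with \<open>a\<^sub>n h\<^sup>n \<in> F[x]\<close> above degree \<open>n m - d\<close>,
  i.e. \<open>D\<^sub>F(p \<circ> q) \<ge> d\<close>.\<close>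

definition coeffs_in :: "'a::zero set \<Rightarrow> 'a poly \<Rightarrow> bool" where
  "coeffs_in F p \<longleftrightarrow> (\<forall>k. coeff p k \<in> F)"

lemma subfield_sum_closed:
  assumes "is_subfield F" "\<And>i. i \<in> A \<Longrightarrow> f i \<in> F"
  shows "sum f A \<in> F"
  using assms(2)
  by (induction A rule: infinite_finite_induct) (use assms(1) in \<open>auto simp: is_subfield_def\<close>)

lemma subfield_mult_right_cancel:
  assumes "is_subfield F" "a * b \<in> F" "b \<in> F" "b \<noteq> 0"
  shows "a \<in> F"
proof -
  have "a * b * inverse b \<in> F"
    using assms by (simp add: is_subfield_def)
  then show ?thesis
    using assms(4) by (simp add: mult.assoc)
qed

lemma coeffs_in_mult:
  assumes "is_subfield F" "coeffs_in F a" "coeffs_in F b"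
  shows "coeffs_in F (a * b)"
  unfolding coeffs_in_def coeff_mult
  using assms by (auto intro!: subfield_sum_closed simp: coeffs_in_def is_subfield_def)

lemma coeffs_in_power:
  assumes "is_subfield F" "coeffs_in F a"
  shows "coeffs_in F (a ^ n)"
proof (induction n)
  case 0
  then show ?case
    using assms(1) by (simp add: coeffs_in_def is_subfield_def coeff_1)
next
  case (Suc n)
  then show ?case
    using coeffs_in_mult[OF assms] by simp
qed

lemma coeffs_in_smult:
  assumes "is_subfield F" "c \<in> F" "coeffs_in F a"
  shows "coeffs_in F (smult c a)"
  using assms by (simp add: coeffs_in_def is_subfield_def)

lemma le_deficit_iff_coeff:
  assumes "0 \<in> F"
  shows "d \<le> deficit F p \<longleftrightarrow> d \<le> degree p \<and> (\<forall>k. degree p - d < k \<longrightarrow> coeff p k \<in> F)"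
proof (cases "\<forall>k. coeff p k \<in> F")
  case True
  then show ?thesis
    by (simp add: deficit_def)
next
  case False
  define S where "S = {k. k \<le> degree p \<and> coeff p k \<notin> F}"
  have "finite S"
    by (simp add: S_def)
  moreover have "S \<noteq> {}"
    using False assms by (auto simp: S_def) (metis le_degree)
  ultimately have "Max S \<in> S" and Max_le: "Max S \<le> degree p - d \<longleftrightarrow> (\<forall>k\<in>S. k \<le> degree p - d)"
    by simp_all
  have top_coeffs: "(\<forall>k\<in>S. k \<le> degree p - d) \<longleftrightarrow> (\<forall>k. degree p - d < k \<longrightarrow> coeff p k \<in> F)"
    unfolding S_def Ball_def mem_Collect_eq
    using assms coeff_eq_0[of p] by (metis le_less_linear not_le)
  have "Max S \<le> degree p"
    using \<open>Max S \<in> S\<close> by (simp add: S_def)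
  then have "d \<le> degree p - Max S \<longleftrightarrow> d \<le> degree p \<and> Max S \<le> degree p - d"
    by linarith
  moreover have "deficit F p = degree p - Max S"
    by (simp only: deficit_def S_def if_not_P[OF False])
  ultimately show ?thesis
    by (simp only: Max_le top_coeffs)
qed

lemma le_deficit_iff_approx:
  assumes "0 \<in> F"
  shows "d \<le> deficit F p \<longleftrightarrow>
    d \<le> degree p \<and> (\<exists>h. coeffs_in F h \<and> degree (p - h) \<le> degree p - d)"
proof -
  have "(\<forall>k. degree p - d < k \<longrightarrow> coeff p k \<in> F) \<longleftrightarrow>
      (\<exists>h. coeffs_in F h \<and> degree (p - h) \<le> degree p - d)"
  proof
    assume top_coeffs: "\<forall>k. degree p - d < k \<longrightarrow> coeff p k \<in> F"
    define r where "r = poly_cutoff (Suc (degree p - d)) p"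
    have "coeffs_in F (p - r)"
      using top_coeffs assms by (simp add: coeffs_in_def r_def coeff_poly_cutoff)
    moreover have "degree (p - (p - r)) \<le> degree p - d"
      by (auto intro: degree_le simp: r_def coeff_poly_cutoff)
    ultimately show "\<exists>h. coeffs_in F h \<and> degree (p - h) \<le> degree p - d"
      by blast
  next
    assume "\<exists>h. coeffs_in F h \<and> degree (p - h) \<le> degree p - d"
    then obtain h where "coeffs_in F h" "degree (p - h) \<le> degree p - d"
      by blast
    then show "\<forall>k. degree p - d < k \<longrightarrow> coeff p k \<in> F"
      using coeff_eq_0[of "p - h"] by (auto simp: coeffs_in_def)
  qed
  then show ?thesis
    using le_deficit_iff_coeff[OF assms] by simp
qed

lemma pcompose_monom: "pcompose (monom c n) q = smult c (q ^ n)"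
  by (induction n) (simp_all add: monom_Suc pcompose_pCons monom_0)

lemma degree_pcompose_minus_lead_le:
  fixes p q :: "'a::comm_ring_1 poly"
  shows "degree (pcompose p q - smult (lead_coeff p) (q ^ degree p)) \<le> (degree p - 1) * degree q"
proof -
  define p' where "p' = p - monom (lead_coeff p) (degree p)"
  have "degree p' \<le> degree p - 1"
    by (rule degree_le) (auto simp: p'_def coeff_monom coeff_eq_0)
  moreover have "pcompose p q - smult (lead_coeff p) (q ^ degree p) = pcompose p' q"
    by (simp add: p'_def pcompose_diff pcompose_monom)
  ultimately show ?thesis
    using degree_pcompose_le[of p' q] mult_le_mono1 order_trans by metis
qed

lemma degree_power_diff_le:
  fixes a b :: "'a::comm_ring_1 poly"
  assumes "degree a \<le> m" "degree b \<le> m"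
  shows "degree (a ^ n - b ^ n) \<le> (n - 1) * m + degree (a - b)"
proof -
  have "degree (b ^ (n - Suc i) * a ^ i) \<le> (n - 1) * m" if "i < n" for i
  proof -
    have "degree (b ^ (n - Suc i)) \<le> (n - Suc i) * m" "degree (a ^ i) \<le> i * m"
      using degree_power_le[of b "n - Suc i"] degree_power_le[of a i] assms
      by (metis le_trans mult.commute mult_le_mono1)+
    then have "degree (b ^ (n - Suc i) * a ^ i) \<le> (n - Suc i) * m + i * m"
      using degree_mult_le[of "b ^ (n - Suc i)" "a ^ i"] by linarith
    then show ?thesis
      using that by (simp add: add_mult_distrib[symmetric])
  qed
  then have "degree (\<Sum>i<n. b ^ (n - Suc i) * a ^ i) \<le> (n - 1) * m"
    by (intro degree_sum_le) auto
  then show ?thesis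
    unfolding power_diff_sumr2[of a n b]
    by (intro order.trans[OF degree_mult_le]) linarith
qed

lemma degree_pcompose_minus_approx_le:
  fixes p q h :: "'a::comm_ring_1 poly"
  assumes "degree (q - h) \<le> degree q - d" "d \<le> degree q"
  shows "degree (pcompose p q - smult (lead_coeff p) (h ^ degree p)) \<le> degree p * degree q - d"
proof (cases "degree p = 0")
  case True
  then show ?thesis
    using degree_pcompose_minus_lead_le[of p q] by simp
next
  case False
  define n m where "n = degree p" and "m = degree q"
  have "degree h \<le> m"
    using degree_diff_le[of q m "q - h"] assms(1) by (simp add: m_def)
  then have "degree (q ^ n - h ^ n) \<le> (n - 1) * m + (m - d)"
    using degree_power_diff_le[of q m h n] assms(1) by (simp add: m_def)
  moreover have "degree (pcompose p q - smult (lead_coeff p) (q ^ n)) \<le> (n - 1) * m"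
    using degree_pcompose_minus_lead_le[of p q] by (simp add: m_def n_def)
  moreover have "(n - 1) * m + (m - d) = n * m - d"
    using False assms(2) by (cases n) (simp_all add: m_def n_def)
  ultimately have "degree (pcompose p q - smult (lead_coeff p) (q ^ n)) \<le> n * m - d"
    and "degree (smult (lead_coeff p) (q ^ n - h ^ n)) \<le> n * m - d"
    using degree_smult_le[of "lead_coeff p" "q ^ n - h ^ n"] by linarith+
  moreover have "pcompose p q - smult (lead_coeff p) (h ^ n) =
      (pcompose p q - smult (lead_coeff p) (q ^ n)) + smult (lead_coeff p) (q ^ n - h ^ n)"
    by (simp add: algebra_simps smult_diff_right)
  ultimately show ?thesis
    unfolding n_def m_def by (metis (no_types) degree_add_le)
qed

theorem theorem9:
  fixes F :: "'a::field_char_0 set" and p q :: "'a poly"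
  assumes "is_subfield F" and "F \<noteq> UNIV"
    and "degree p \<ge> 1"
    and "q \<noteq> 0"
    and "lead_coeff p * lead_coeff q \<in> F"
  shows "deficit F (pcompose p q) \<ge> deficit F q"
proof (cases "deficit F q = 0")
  case False
  define d where "d = deficit F q"
  have F0: "0 \<in> F"
    using assms(1) by (simp add: is_subfield_def)
  have "d \<le> degree q" and "lead_coeff q \<in> F"
    using le_deficit_iff_coeff[OF F0, of d q] False by (simp_all add: d_def)
  then have lead_p: "lead_coeff p \<in> F"
    using subfield_mult_right_cancel[OF assms(1,5)] assms(4) by simp
  obtain h where h: "coeffs_in F h" "degree (q - h) \<le> degree q - d"
    using le_deficit_iff_approx[OF F0, of d q] by (auto simp: d_def)
  have "coeffs_in F (smult (lead_coeff p) (h ^ degree p))"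
    using coeffs_in_smult[OF assms(1) lead_p coeffs_in_power[OF assms(1) h(1)]] .
  moreover have "degree (pcompose p q - smult (lead_coeff p) (h ^ degree p)) \<le> degree (pcompose p q) - d"
    using degree_pcompose_minus_approx_le[OF h(2) \<open>d \<le> degree q\<close>] by (simp add: degree_pcompose)
  moreover have "d \<le> degree (pcompose p q)"
    using \<open>d \<le> degree q\<close> mult_le_mono1[OF assms(3), of "degree q"]
    unfolding degree_pcompose by linarith
  ultimately show ?thesis
    unfolding d_def[symmetric] le_deficit_iff_approx[OF F0] by blast
qed simp

end
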